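(* Let $M_1,\dots,M_k$ be pc monoids over mutually disjoint variable sets $X_1,\dots,X_k$. Suppose that for each $i$, $A_i$ is a randomized procedure that outputs an evaluation $v_i:\mathbb{F}\langle M_i\rangle\to\mathcal{M}_{t_i(d)}(\mathbb{F})$ such that for any polynomial $g_i\in\mathbb{F}\langle M_i\rangle$ of degree at most $d$, $g_i$ is nonzero if and only if $v_i(g_i)$ is a nonzero matrix, with probability at least $1-\frac{1}{2k}$. Then for the evaluation $\mathbf{v}=(v_1,\dots,v_k):\mathbb{F}\langle M_1\rangle\otimes\cdots\otimes\mathbb{F}\langle M_k\rangle\to\mathcal{M}_{t_1(d)}(\mathbb{F})\otimes\cdots\otimes\mathcal{M}_{t_k(d)}(\mathbb{F})$ and any nonzero polynomial $f\in\mathbb{F}\langle M_1\rangle\otimes\cdots\otimes\mathbb{F}\langle M_k\rangle$ of degree at most $d$, the matrix $\mathbf{v}(f)$ is nonzero with probability at least $1/2$.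
   Context: $\mathbb{F}$ is a field. A pc monoid $M=(X^*,I)$ over a finite alphabet $X$ with symmetric reflexive $I\subseteq X\times X$ consists of classes of words modulo the congruence generated by $xy=yx$ for $(x,y)\in I$; $\mathbb{F}\langle M\rangle$ is its monoid algebra (polynomials whose monomials are elements of $M$), with degree the maximal word length of a monomial. An evaluation $v:\mathbb{F}\langle M\rangle\to\mathcal{M}_t(\mathbb{F})$ is given by assigning matrices to the variables that respect the commutation relations, extended multiplicatively and linearly. The evaluation $\mathbf{v}=(v_1,\dots,v_k)$ on the tensor product is defined on $m_1\otimes\cdots\otimes m_k$ by $v_1(m_1)\otimes\cdots\otimes v_k(m_k)$ (Kronecker product) and extended linearly, where $v_1,\dots,v_k$ are the independent outputs of $A_1,\dots,A_k$. *)

theory Defs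
  imports "Jordan_Normal_Form.Matrix" "HOL-Probability.Product_PMF"
begin

definition swap_step :: "('x \<times> 'x) set \<Rightarrow> ('x list \<times> 'x list) set" where
  "swap_step I = {(u @ [x, y] @ v, u @ [y, x] @ v) | u v x y. (x, y) \<in> I}"

definition trace_equiv :: "('x \<times> 'x) set \<Rightarrow> ('x list \<times> 'x list) set" where
  "trace_equiv I = (swap_step I \<union> (swap_step I)\<inverse>)\<^sup>*"

definition pc_data :: "'x set \<Rightarrow> ('x \<times> 'x) set \<Rightarrow> bool" where
  "pc_data X I \<longleftrightarrow> finite X \<and> I \<subseteq> X \<times> X \<and> sym I \<and> (\<forall>x\<in>X. (x, x) \<in> I)"

definition pc_monoid :: "'x set \<Rightarrow> ('x \<times> 'x) set \<Rightarrow> 'x list set set" where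
  "pc_monoid X I = {w. set w \<subseteq> X} // trace_equiv I"

text \<open>Elements of F<M>: finitely supported coefficient functions on M.\<close>
definition poly_supp :: "('m \<Rightarrow> 'a::zero) \<Rightarrow> 'm set" where
  "poly_supp g = {m. g m \<noteq> 0}"

definition is_pc_poly :: "'x set \<Rightarrow> ('x \<times> 'x) set \<Rightarrow> ('x list set \<Rightarrow> 'a::zero) \<Rightarrow> bool" where
  "is_pc_poly X I g \<longleftrightarrow> finite (poly_supp g) \<and> poly_supp g \<subseteq> pc_monoid X I"

text \<open>Length of a monomial (all representatives have the same length).\<close>
definition mono_len :: "'x list set \<Rightarrow> nat" where
  "mono_len m = length (SOME w. w \<in> m)"

definition pc_degree :: "('x list set \<Rightarrow> 'a::zero) \<Rightarrow> nat" where
  "pc_degree g = Max (insert 0 (mono_len ` poly_supp g))"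

definition is_evaluation :: "'x set \<Rightarrow> ('x \<times> 'x) set \<Rightarrow> nat \<Rightarrow> ('x \<Rightarrow> 'a::field mat) \<Rightarrow> bool" where
  "is_evaluation X I t \<sigma> \<longleftrightarrow>
     (\<forall>x\<in>X. \<sigma> x \<in> carrier_mat t t) \<and> (\<forall>(x, y)\<in>I. \<sigma> x * \<sigma> y = \<sigma> y * \<sigma> x)"

definition eval_word :: "nat \<Rightarrow> ('x \<Rightarrow> 'a::field mat) \<Rightarrow> 'x list \<Rightarrow> 'a mat" where
  "eval_word t \<sigma> w = foldr (\<lambda>x M. \<sigma> x * M) w (1\<^sub>m t)"

definition eval_mono :: "nat \<Rightarrow> ('x \<Rightarrow> 'a::field mat) \<Rightarrow> 'x list set \<Rightarrow> 'a mat" where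
  "eval_mono t \<sigma> m = eval_word t \<sigma> (SOME w. w \<in> m)"

definition eval_poly :: "nat \<Rightarrow> ('x \<Rightarrow> 'a::field mat) \<Rightarrow> ('x list set \<Rightarrow> 'a) \<Rightarrow> 'a mat" where
  "eval_poly t \<sigma> g = Matrix.mat t t (\<lambda>(i, j). \<Sum>m\<in>poly_supp g. g m * eval_mono t \<sigma> m $$ (i, j))"

definition kron :: "'a::semiring_1 mat \<Rightarrow> 'a mat \<Rightarrow> 'a mat" where
  "kron A B = Matrix.mat (dim_row A * dim_row B) (dim_col A * dim_col B)
     (\<lambda>(i, j). A $$ (i div dim_row B, j div dim_col B) * B $$ (i mod dim_row B, j mod dim_col B))"

definition kron_list :: "'a::semiring_1 mat list \<Rightarrow> 'a mat" where
  "kron_list As = foldr kron As (1\<^sub>m 1)"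

text \<open>Elements of F<M_1> (x) ... (x) F<M_k>: finitely supported coefficient functions on
  tuples (m_1,...,m_k) (lists of length k) of monomials, m_i in M_i.\<close>
definition is_tensor_poly :: "nat \<Rightarrow> (nat \<Rightarrow> 'x set) \<Rightarrow> (nat \<Rightarrow> ('x \<times> 'x) set)
     \<Rightarrow> ('x list set list \<Rightarrow> 'a::zero) \<Rightarrow> bool" where
  "is_tensor_poly k X I f \<longleftrightarrow> finite (poly_supp f) \<and>
     (\<forall>ms\<in>poly_supp f. length ms = k \<and> (\<forall>i<k. ms ! i \<in> pc_monoid (X i) (I i)))"

text \<open>Degree of a tensor monomial m_1 (x) ... (x) m_k = m_1 ... m_k: total word length.\<close>
definition tensor_degree :: "('x list set list \<Rightarrow> 'a::zero) \<Rightarrow> nat" where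
  "tensor_degree f = Max (insert 0 ((\<lambda>ms. sum_list (map mono_len ms)) ` poly_supp f))"

definition eval_tensor :: "nat \<Rightarrow> (nat \<Rightarrow> nat) \<Rightarrow> (nat \<Rightarrow> 'x \<Rightarrow> 'a::field mat)
     \<Rightarrow> ('x list set list \<Rightarrow> 'a) \<Rightarrow> 'a mat" where
  "eval_tensor k t \<sigma>s f =
     (let n = prod t {..<k} in
      Matrix.mat n n (\<lambda>(i, j). \<Sum>ms\<in>poly_supp f.
         f ms * kron_list (map (\<lambda>l. eval_mono (t l) (\<sigma>s l) (ms ! l)) [0..<k]) $$ (i, j)))"

definition nonzero_mat :: "'a::zero mat \<Rightarrow> bool" where
  "nonzero_mat M \<longleftrightarrow> M \<noteq> 0\<^sub>m (dim_row M) (dim_col M)"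

end

theory Submission
  imports Defs
begin

text \<open>Induction on the number k of factors, peeling off the last one. Write
  f = \<Sum> r \<otimes> g_r with r ranging over monomials of the first k - 1 factors. Some g_r is
  nonzero of degree at most d, so with probability at least 1 - \<epsilon> the last evaluation y makes
  v_k(g_r) nonzero, say at entry (a, b). For such a y, the (a, b)-entries of the blocks of
  v(f) are the entries of the evaluation of f' = \<Sum> v_k(g_r)[a, b] r, which is nonzero of degree at
  most d, so by induction it is nonzero with probability at least 1 - (k - 1)\<epsilon>. By independence
  the failure probabilities add up to at most k\<epsilon>, which is 1/2 for \<epsilon> = 1/(2k).\<close>

lemma swap_step_set_eq:
  assumes "(v, w) \<in> swap_step I"
  shows "set w = set v"
proof -
  obtain a b x y where "v = a @ [x, y] @ b" "w = a @ [y, x] @ b"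
    using assms unfolding swap_step_def by (auto simp only: mem_Collect_eq)
  then show ?thesis by auto
qed

lemma trace_equiv_set_eq:
  assumes "(u, w) \<in> trace_equiv I"
  shows "set w = set u"
  using assms unfolding trace_equiv_def
proof (induction rule: rtrancl_induct)
  case (step v v')
  then have "set v' = set v" using swap_step_set_eq by fastforce
  with step.IH show ?case by simp
qed simp

lemma pc_monoid_some_rep_subset:
  assumes "m \<in> pc_monoid X I"
  shows "set (SOME w. w \<in> m) \<subseteq> X"
proof -
  obtain u where u: "set u \<subseteq> X" "m = trace_equiv I `` {u}"
    using assms unfolding pc_monoid_def quotient_def by auto
  then have "u \<in> m" unfolding trace_equiv_def by auto
  then have "(SOME w. w \<in> m) \<in> m" by (rule someI)
  with u show ?thesis using trace_equiv_set_eq by fastforce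
qed

lemma eval_word_carrier:
  assumes "\<And>x. x \<in> set w \<Longrightarrow> \<sigma> x \<in> carrier_mat t t"
  shows "eval_word t \<sigma> w \<in> carrier_mat t t"
  using assms by (induction w) (auto simp: eval_word_def intro!: mult_carrier_mat)

lemma eval_mono_carrier:
  assumes "m \<in> pc_monoid X I" "is_evaluation X I t \<sigma>"
  shows "eval_mono t \<sigma> m \<in> carrier_mat t t"
  unfolding eval_mono_def using pc_monoid_some_rep_subset[OF assms(1)] assms(2)
  by (intro eval_word_carrier) (auto simp: is_evaluation_def)

lemma nonzero_mat_iff:
  "nonzero_mat M \<longleftrightarrow> (\<exists>i<dim_row M. \<exists>j<dim_col M. M $$ (i, j) \<noteq> 0)"
proof
  assume "nonzero_mat M"
  then show "\<exists>i<dim_row M. \<exists>j<dim_col M. M $$ (i, j) \<noteq> 0"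
    unfolding nonzero_mat_def by (auto intro!: eq_matI)
qed (metis nonzero_mat_def index_zero_mat(1))

lemma dim_kron [simp]:
  "dim_row (kron A B) = dim_row A * dim_row B"
  "dim_col (kron A B) = dim_col A * dim_col B"
  by (simp_all add: kron_def)

lemma index_kron:
  assumes "i < dim_row A * dim_row B" "j < dim_col A * dim_col B"
  shows "kron A B $$ (i, j) =
    A $$ (i div dim_row B, j div dim_col B) * B $$ (i mod dim_row B, j mod dim_col B)"
  using assms by (simp add: kron_def)

lemma mult_add_less_mult:
  fixes i a n m :: nat
  assumes "i < n" "a < m"
  shows "i * m + a < n * m"
proof -
  have "i * m + a < (i + 1) * m" using assms(2) by simp
  also have "\<dots> \<le> n * m" using assms(1) by (intro mult_right_mono) auto
  finally show ?thesis .
qed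

lemma index_kron_block:
  assumes "i < dim_row A" "j < dim_col A" "a < dim_row B" "b < dim_col B"
  shows "kron A B $$ (i * dim_row B + a, j * dim_col B + b) = A $$ (i, j) * B $$ (a, b)"
  using assms by (simp add: index_kron mult_add_less_mult)

lemma kron_assoc: "kron (kron A B) C = kron A (kron B C)"
proof (rule eq_matI)
  fix i j
  assume "i < dim_row (kron A (kron B C))" "j < dim_col (kron A (kron B C))"
  then have i: "i < dim_row A * dim_row B * dim_row C" and j: "j < dim_col A * dim_col B * dim_col C"
    by (simp_all add: mult.assoc)
  then have "0 < dim_row C" "0 < dim_col C" by (auto intro: ccontr)
  then have "i mod (dim_row B * dim_row C) div dim_row C = i div dim_row C mod dim_row B"
    "j mod (dim_col B * dim_col C) div dim_col C = j div dim_col C mod dim_col B"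
    "i div (dim_row B * dim_row C) = i div dim_row C div dim_row B"
    "j div (dim_col B * dim_col C) = j div dim_col C div dim_col B"
    "i mod (dim_row B * dim_row C) mod dim_row C = i mod dim_row C"
    "j mod (dim_col B * dim_col C) mod dim_col C = j mod dim_col C"
    by (simp_all add: mult.commute[of "dim_row B"] mult.commute[of "dim_col B"] mod_mult2_eq div_mult2_eq)
  moreover have "i div dim_row C < dim_row A * dim_row B" "j div dim_col C < dim_col A * dim_col B"
    using i j by (simp_all add: less_mult_imp_div_less)
  moreover have "i mod (dim_row B * dim_row C) < dim_row B * dim_row C"
    "j mod (dim_col B * dim_col C) < dim_col B * dim_col C"
    using \<open>0 < dim_row C\<close> \<open>0 < dim_col C\<close> i j by (auto intro!: mod_less_divisor intro: ccontr)
  ultimately show "kron (kron A B) C $$ (i, j) = kron A (kron B C) $$ (i, j)"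
    using i j by (simp add: index_kron mult.assoc)
qed (simp_all add: mult.assoc)

lemma kron_one_left [simp]: "kron (1\<^sub>m 1) B = B"
  by (rule eq_matI) (simp_all add: index_kron)

lemma kron_one_right [simp]: "kron A (1\<^sub>m 1) = A"
  by (rule eq_matI) (simp_all add: index_kron)

lemma kron_list_Nil [simp]: "kron_list [] = 1\<^sub>m 1"
  and kron_list_Cons [simp]: "kron_list (A # L) = kron A (kron_list L)"
  by (simp_all add: kron_list_def)

lemma kron_list_append: "kron_list (L @ M) = kron (kron_list L) (kron_list M)"
  by (induction L) (simp_all add: kron_assoc del: One_nat_def)

lemma kron_list_snoc: "kron_list (L @ [A]) = kron (kron_list L) A"
  by (simp add: kron_list_append del: One_nat_def)

definition eval_tensor_mono ::
    "nat \<Rightarrow> (nat \<Rightarrow> nat) \<Rightarrow> (nat \<Rightarrow> 'x \<Rightarrow> 'a::field mat) \<Rightarrow> 'x list set list \<Rightarrow> 'a mat" where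
  "eval_tensor_mono k t \<sigma>s ms = kron_list (map (\<lambda>l. eval_mono (t l) (\<sigma>s l) (ms ! l)) [0..<k])"

lemma eval_tensor_mono_Suc:
  "eval_tensor_mono (Suc k) t \<sigma>s ms = kron (eval_tensor_mono k t \<sigma>s ms) (eval_mono (t k) (\<sigma>s k) (ms ! k))"
  by (simp add: eval_tensor_mono_def kron_list_snoc)

lemma eval_tensor_mono_cong:
  assumes "\<And>l. l < k \<Longrightarrow> \<sigma>s l = \<sigma>s' l \<and> ms ! l = ms' ! l"
  shows "eval_tensor_mono k t \<sigma>s ms = eval_tensor_mono k t \<sigma>s' ms'"
  unfolding eval_tensor_mono_def using assms by (intro arg_cong[where f = kron_list] map_cong) auto

lemma eval_tensor_mono_carrier:
  assumes "\<And>l. l < k \<Longrightarrow> is_evaluation (X l) (I l) (t l) (\<sigma>s l)"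
    and "\<And>l. l < k \<Longrightarrow> ms ! l \<in> pc_monoid (X l) (I l)"
  shows "eval_tensor_mono k t \<sigma>s ms \<in> carrier_mat (prod t {..<k}) (prod t {..<k})"
  using assms
proof (induction k)
  case 0
  then show ?case by (simp add: eval_tensor_mono_def del: One_nat_def)
next
  case (Suc k)
  then have "eval_mono (t k) (\<sigma>s k) (ms ! k) \<in> carrier_mat (t k) (t k)"
    by (intro eval_mono_carrier) auto
  with Suc show ?case by (auto simp: eval_tensor_mono_Suc lessThan_Suc mult.commute)
qed

lemma dim_eval_tensor [simp]:
  "dim_row (eval_tensor k t \<sigma>s f) = prod t {..<k}"
  "dim_col (eval_tensor k t \<sigma>s f) = prod t {..<k}"
  by (simp_all add: eval_tensor_def Let_def)

lemma index_eval_tensor: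
  assumes "finite S" "poly_supp f \<subseteq> S" "i < prod t {..<k}" "j < prod t {..<k}"
  shows "eval_tensor k t \<sigma>s f $$ (i, j) = (\<Sum>ms\<in>S. f ms * eval_tensor_mono k t \<sigma>s ms $$ (i, j))"
proof -
  have "eval_tensor k t \<sigma>s f $$ (i, j) = (\<Sum>ms\<in>poly_supp f. f ms * eval_tensor_mono k t \<sigma>s ms $$ (i, j))"
    using assms(3,4) by (simp add: eval_tensor_def eval_tensor_mono_def)
  also have "\<dots> = (\<Sum>ms\<in>S. f ms * eval_tensor_mono k t \<sigma>s ms $$ (i, j))"
    using assms(1,2) by (intro sum.mono_neutral_left) (auto simp: poly_supp_def)
  finally show ?thesis .
qed

section \<open>Contracting the last tensor factor\<close>

text \<open>For f = \<Sum> r \<otimes> g_r with g_r in the last factor, contract_last f \<phi> maps r to \<phi>(g_r), i.e.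
  it is (id \<otimes> \<phi>) f for the linear extension of \<phi>.\<close>

definition contract_last :: "('m list \<Rightarrow> 'a::semiring_0) \<Rightarrow> ('m \<Rightarrow> 'a) \<Rightarrow> 'm list \<Rightarrow> 'a" where
  "contract_last f \<phi> r = (\<Sum>ms | ms \<in> poly_supp f \<and> butlast ms = r. f ms * \<phi> (last ms))"

lemma poly_supp_contract_last: "poly_supp (contract_last f \<phi>) \<subseteq> butlast ` poly_supp f"
proof
  fix r
  assume "r \<in> poly_supp (contract_last f \<phi>)"
  then have "contract_last f \<phi> r \<noteq> 0" by (simp add: poly_supp_def)
  then obtain ms where "ms \<in> {ms. ms \<in> poly_supp f \<and> butlast ms = r}"
    unfolding contract_last_def by (rule sum.not_neutral_contains_not_neutral)
  then show "r \<in> butlast ` poly_supp f" by blast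
qed

lemma contract_last_eq_sum_slice:
  assumes "finite (poly_supp f)" "\<And>ms. ms \<in> poly_supp f \<Longrightarrow> ms \<noteq> []"
  shows "contract_last f \<phi> r = (\<Sum>m\<in>poly_supp (\<lambda>m. f (r @ [m])). f (r @ [m]) * \<phi> m)"
proof -
  have "bij_betw (\<lambda>m. r @ [m]) (poly_supp (\<lambda>m. f (r @ [m]))) {ms. ms \<in> poly_supp f \<and> butlast ms = r}"
  proof (rule bij_betwI')
    fix ms
    assume "ms \<in> {ms. ms \<in> poly_supp f \<and> butlast ms = r}"
    then have "ms \<in> poly_supp f" "ms = r @ [last ms]"
      using assms(2) append_butlast_last_id by auto
    then show "\<exists>m\<in>poly_supp (\<lambda>m. f (r @ [m])). ms = r @ [m]"
      by (intro bexI[of _ "last ms"]) (simp_all add: poly_supp_def)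
  qed (auto simp: poly_supp_def)
  then show ?thesis
    unfolding contract_last_def by (subst sum.reindex_bij_betw[symmetric]) auto
qed

lemma sum_list_map_butlast_le:
  fixes g :: "'b \<Rightarrow> nat"
  shows "sum_list (map g (butlast ms)) \<le> sum_list (map g ms)"
  by (cases ms rule: rev_cases) simp_all

lemma is_tensor_poly_contract_last:
  assumes "is_tensor_poly (Suc k) X I f"
  shows "is_tensor_poly k X I (contract_last f \<phi>)"
  unfolding is_tensor_poly_def
proof
  show "finite (poly_supp (contract_last f \<phi>))"
    using assms poly_supp_contract_last by (metis finite_imageI finite_subset is_tensor_poly_def)
  show "\<forall>r\<in>poly_supp (contract_last f \<phi>). length r = k \<and> (\<forall>i<k. r ! i \<in> pc_monoid (X i) (I i))"
    using assms poly_supp_contract_last by (fastforce simp: is_tensor_poly_def nth_butlast)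
qed

lemma tensor_degree_ge:
  assumes "finite (poly_supp f)" "ms \<in> poly_supp f"
  shows "sum_list (map mono_len ms) \<le> tensor_degree f"
  unfolding tensor_degree_def using assms by (intro Max_ge) auto

lemma tensor_degree_contract_last:
  assumes "finite (poly_supp f)"
  shows "tensor_degree (contract_last f \<phi>) \<le> tensor_degree f"
proof -
  have "sum_list (map mono_len r) \<le> tensor_degree f" if r: "r \<in> poly_supp (contract_last f \<phi>)" for r
  proof -
    obtain ms where "ms \<in> poly_supp f" "r = butlast ms"
      using r poly_supp_contract_last by blast
    then show ?thesis
      using tensor_degree_ge[OF assms] sum_list_map_butlast_le[of mono_len ms] le_trans by blast
  qed
  moreover have "finite (poly_supp (contract_last f \<phi>))"
    using assms poly_supp_contract_last by (meson finite_imageI finite_subset)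
  ultimately show ?thesis by (simp add: tensor_degree_def)
qed

lemma finite_poly_supp_slice:
  assumes "finite (poly_supp f)"
  shows "finite (poly_supp (\<lambda>m. f (r @ [m])))"
proof -
  have "poly_supp (\<lambda>m. f (r @ [m])) = (\<lambda>m. r @ [m]) -` poly_supp f"
    by (simp add: poly_supp_def)
  then show ?thesis using assms by (auto intro: finite_vimageI inj_onI)
qed

lemma is_pc_poly_slice:
  assumes "is_tensor_poly (Suc k) X I f" "length r = k"
  shows "is_pc_poly (X k) (I k) (\<lambda>m. f (r @ [m]))"
  unfolding is_pc_poly_def
proof
  show "finite (poly_supp (\<lambda>m. f (r @ [m])))"
    using assms(1) by (simp add: is_tensor_poly_def finite_poly_supp_slice)
  show "poly_supp (\<lambda>m. f (r @ [m])) \<subseteq> pc_monoid (X k) (I k)"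
    using assms by (fastforce simp: is_tensor_poly_def poly_supp_def nth_append)
qed

lemma pc_degree_slice_le:
  assumes "finite (poly_supp f)"
  shows "pc_degree (\<lambda>m. f (r @ [m])) \<le> tensor_degree f"
proof -
  have "mono_len m \<le> tensor_degree f" if "f (r @ [m]) \<noteq> 0" for m
  proof -
    have "r @ [m] \<in> poly_supp f" using that by (simp add: poly_supp_def)
    then have "sum_list (map mono_len (r @ [m])) \<le> tensor_degree f"
      using assms by (rule tensor_degree_ge[rotated])
    then show ?thesis by simp
  qed
  moreover have "finite (poly_supp (\<lambda>m. f (r @ [m])))"
    using assms by (rule finite_poly_supp_slice)
  ultimately show ?thesis by (auto simp: pc_degree_def poly_supp_def)
qed

lemma block_index_less_prod:
  fixes t :: "nat \<Rightarrow> nat"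
  assumes "i < prod t {..<k}" "a < t k"
  shows "i * t k + a < prod t {..<Suc k}"
  using mult_add_less_mult[OF assms] by (simp add: lessThan_Suc mult.commute)

lemma index_eval_tensor_mono_Suc_block:
  assumes \<sigma>s: "\<And>l. l < k \<Longrightarrow> is_evaluation (X l) (I l) (t l) (\<sigma>s l)"
    and y: "is_evaluation (X k) (I k) (t k) y"
    and ms: "length ms = Suc k" "\<And>l. l < Suc k \<Longrightarrow> ms ! l \<in> pc_monoid (X l) (I l)"
    and ij: "i < prod t {..<k}" "j < prod t {..<k}" and ab: "a < t k" "b < t k"
  shows "eval_tensor_mono (Suc k) t (\<sigma>s(k := y)) ms $$ (i * t k + a, j * t k + b) =
    eval_tensor_mono k t \<sigma>s (butlast ms) $$ (i, j) * eval_mono (t k) y (last ms) $$ (a, b)"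
proof -
  have last: "last ms = ms ! k"
    using ms(1) by (metis diff_Suc_1 last_conv_nth list.size(3) nat.distinct(1))
  have "eval_tensor_mono k t (\<sigma>s(k := y)) ms = eval_tensor_mono k t \<sigma>s (butlast ms)"
    using ms(1) by (intro eval_tensor_mono_cong) (simp add: nth_butlast)
  then have split: "eval_tensor_mono (Suc k) t (\<sigma>s(k := y)) ms =
      kron (eval_tensor_mono k t \<sigma>s (butlast ms)) (eval_mono (t k) y (last ms))"
    by (simp add: eval_tensor_mono_Suc last)
  have "eval_tensor_mono k t \<sigma>s (butlast ms) \<in> carrier_mat (prod t {..<k}) (prod t {..<k})"
    using \<sigma>s ms by (intro eval_tensor_mono_carrier) (auto simp: nth_butlast)
  moreover have "eval_mono (t k) y (last ms) \<in> carrier_mat (t k) (t k)"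
    using ms(2)[of k] y by (simp add: last eval_mono_carrier)
  ultimately show ?thesis
    using ij ab index_kron_block unfolding split by (metis carrier_matD)
qed

lemma index_eval_tensor_Suc_block:
  fixes f :: "'x list set list \<Rightarrow> 'a::field"
  assumes f: "is_tensor_poly (Suc k) X I f"
    and \<sigma>s: "\<And>l. l < k \<Longrightarrow> is_evaluation (X l) (I l) (t l) (\<sigma>s l)"
    and y: "is_evaluation (X k) (I k) (t k) y"
    and ij: "i < prod t {..<k}" "j < prod t {..<k}" and ab: "a < t k" "b < t k"
  defines "\<phi> \<equiv> \<lambda>m. eval_mono (t k) y m $$ (a, b)"
  shows "eval_tensor (Suc k) t (\<sigma>s(k := y)) f $$ (i * t k + a, j * t k + b) =
    eval_tensor k t \<sigma>s (contract_last f \<phi>) $$ (i, j)"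
proof -
  define S where "S = poly_supp f"
  define T where "T = (\<lambda>r. eval_tensor_mono k t \<sigma>s r $$ (i, j))"
  have fin: "finite S" using f by (simp add: S_def is_tensor_poly_def)
  have "i * t k + a < prod t {..<Suc k}" "j * t k + b < prod t {..<Suc k}"
    using block_index_less_prod ij ab by blast+
  then have "eval_tensor (Suc k) t (\<sigma>s(k := y)) f $$ (i * t k + a, j * t k + b) =
      (\<Sum>ms\<in>S. f ms * eval_tensor_mono (Suc k) t (\<sigma>s(k := y)) ms $$ (i * t k + a, j * t k + b))"
    using fin by (simp add: index_eval_tensor S_def)
  also have "\<dots> = (\<Sum>ms\<in>S. f ms * (T (butlast ms) * \<phi> (last ms)))"
  proof (intro sum.cong refl)
    fix ms
    assume "ms \<in> S"
    then have "length ms = Suc k" "\<And>l. l < Suc k \<Longrightarrow> ms ! l \<in> pc_monoid (X l) (I l)"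
      using f by (auto simp: S_def is_tensor_poly_def)
    from index_eval_tensor_mono_Suc_block[OF \<sigma>s y this ij ab]
    show "f ms * eval_tensor_mono (Suc k) t (\<sigma>s(k := y)) ms $$ (i * t k + a, j * t k + b) =
        f ms * (T (butlast ms) * \<phi> (last ms))"
      by (simp add: T_def \<phi>_def)
  qed
  also have "\<dots> = (\<Sum>r\<in>butlast ` S. \<Sum>ms | ms \<in> S \<and> butlast ms = r. f ms * \<phi> (last ms) * T r)"
    using fin by (subst sum.group[symmetric, where g = butlast]) (auto intro!: sum.cong simp: mult_ac)
  also have "\<dots> = (\<Sum>r\<in>butlast ` S. contract_last f \<phi> r * T r)"
    by (simp add: contract_last_def S_def sum_distrib_right)
  also have "\<dots> = eval_tensor k t \<sigma>s (contract_last f \<phi>) $$ (i, j)"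
    unfolding T_def S_def
    by (rule index_eval_tensor[symmetric]) (use fin ij poly_supp_contract_last in \<open>auto simp: S_def\<close>)
  finally show ?thesis .
qed

lemma nonzero_slice_contraction:
  fixes f :: "'x list set list \<Rightarrow> 'a::field"
  assumes f: "is_tensor_poly (Suc k) X I f"
    and y: "is_evaluation (X k) (I k) (t k) y"
    and nz: "nonzero_mat (eval_poly (t k) y (\<lambda>m. f (r @ [m])))"
  obtains \<phi> where "contract_last f \<phi> r \<noteq> 0"
    and "\<And>\<sigma>s. (\<And>l. l < k \<Longrightarrow> is_evaluation (X l) (I l) (t l) (\<sigma>s l)) \<Longrightarrow>
      nonzero_mat (eval_tensor k t \<sigma>s (contract_last f \<phi>)) \<Longrightarrow>
      nonzero_mat (eval_tensor (Suc k) t (\<sigma>s(k := y)) f)"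
proof -
  obtain a b where ab: "a < t k" "b < t k" and "eval_poly (t k) y (\<lambda>m. f (r @ [m])) $$ (a, b) \<noteq> 0"
    using nz by (auto simp: nonzero_mat_iff eval_poly_def)
  define \<phi> where "\<phi> = (\<lambda>m. eval_mono (t k) y m $$ (a, b))"
  have "contract_last f \<phi> r = (\<Sum>m\<in>poly_supp (\<lambda>m. f (r @ [m])). f (r @ [m]) * \<phi> m)"
    by (rule contract_last_eq_sum_slice) (use f in \<open>auto simp: is_tensor_poly_def\<close>)
  also have "\<dots> = eval_poly (t k) y (\<lambda>m. f (r @ [m])) $$ (a, b)"
    using ab by (simp add: eval_poly_def \<phi>_def)
  finally have "contract_last f \<phi> r = eval_poly (t k) y (\<lambda>m. f (r @ [m])) $$ (a, b)" .
  with \<open>eval_poly (t k) y (\<lambda>m. f (r @ [m])) $$ (a, b) \<noteq> 0\<close> have "contract_last f \<phi> r \<noteq> 0"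
    by simp
  moreover have "nonzero_mat (eval_tensor (Suc k) t (\<sigma>s(k := y)) f)"
    if \<sigma>s: "\<And>l. l < k \<Longrightarrow> is_evaluation (X l) (I l) (t l) (\<sigma>s l)"
      and nz': "nonzero_mat (eval_tensor k t \<sigma>s (contract_last f \<phi>))" for \<sigma>s
  proof -
    obtain i j where ij: "i < prod t {..<k}" "j < prod t {..<k}"
      and "eval_tensor k t \<sigma>s (contract_last f \<phi>) $$ (i, j) \<noteq> 0"
      using nz' by (auto simp: nonzero_mat_iff)
    then have "eval_tensor (Suc k) t (\<sigma>s(k := y)) f $$ (i * t k + a, j * t k + b) \<noteq> 0"
      using index_eval_tensor_Suc_block[OF f \<sigma>s y ij ab] by (simp add: \<phi>_def)
    moreover have "i * t k + a < prod t {..<Suc k}" "j * t k + b < prod t {..<Suc k}"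
      using block_index_less_prod ij ab by blast+
    ultimately show ?thesis
      unfolding nonzero_mat_iff dim_eval_tensor by blast
  qed
  ultimately show ?thesis using that by blast
qed

section \<open>The probabilistic estimate\<close>

lemma Pi_pmf_lessThan_Suc:
  "Pi_pmf {..<Suc k} dflt A = bind_pmf (A k) (\<lambda>y. map_pmf (\<lambda>h. h(k := y)) (Pi_pmf {..<k} dflt A))"
  by (simp add: lessThan_Suc Pi_pmf_insert' map_pmf_def)

lemma measure_bind_pmf_ge:
  fixes c :: real
  assumes "c \<ge> 0" "\<And>y. y \<in> set_pmf p \<Longrightarrow> y \<in> G \<Longrightarrow> measure_pmf.prob (q y) E \<ge> c"
  shows "measure_pmf.prob (bind_pmf p q) E \<ge> measure_pmf.prob p G * c"
proof -
  have "ennreal c * emeasure (measure_pmf p) G = (\<integral>\<^sup>+y. ennreal c * indicator G y \<partial>p)"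
    by (simp add: nn_integral_cmult_indicator)
  also have "\<dots> \<le> (\<integral>\<^sup>+y. emeasure (measure_pmf (q y)) E \<partial>p)"
    using assms(2) by (intro nn_integral_mono_AE)
      (auto simp: AE_measure_pmf_iff measure_pmf.emeasure_eq_measure indicator_def)
  also have "\<dots> = emeasure (measure_pmf (bind_pmf p q)) E"
    by simp
  finally have "ennreal (c * measure_pmf.prob p G) \<le> ennreal (measure_pmf.prob (bind_pmf p q) E)"
    by (simp add: measure_pmf.emeasure_eq_measure ennreal_mult assms(1))
  then show ?thesis by (simp add: mult.commute)
qed

lemma prob_Pi_pmf_lessThan_Suc_ge:
  fixes \<epsilon> :: real
  assumes "\<epsilon> \<ge> 0" "measure_pmf.prob (A k) G \<ge> 1 - \<epsilon>"
    and "\<And>y. y \<in> set_pmf (A k) \<Longrightarrow> y \<in> G \<Longrightarrow>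
      measure_pmf.prob (Pi_pmf {..<k} dflt A) {h. h(k := y) \<in> E} \<ge> 1 - real k * \<epsilon>"
  shows "measure_pmf.prob (Pi_pmf {..<Suc k} dflt A) E \<ge> 1 - real (Suc k) * \<epsilon>"
proof (cases "real k * \<epsilon> \<le> 1")
  case False
  then have "1 - real (Suc k) * \<epsilon> \<le> 0" using assms(1) by (simp add: algebra_simps)
  then show ?thesis by (meson measure_nonneg order_trans)
next
  case True
  have "1 - real (Suc k) * \<epsilon> \<le> (1 - \<epsilon>) * (1 - real k * \<epsilon>)"
    using assms(1) by (simp add: algebra_simps)
  also have "\<dots> \<le> measure_pmf.prob (A k) G * (1 - real k * \<epsilon>)"
    using assms(2) True by (intro mult_right_mono) auto
  also have "\<dots> \<le> measure_pmf.prob (Pi_pmf {..<Suc k} dflt A) E"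
    unfolding Pi_pmf_lessThan_Suc using True assms(3)
    by (intro measure_bind_pmf_ge) (auto simp: vimage_def)
  finally show ?thesis .
qed

lemma obtain_nonzero_slice:
  assumes "is_tensor_poly (Suc k) X I f" "f \<noteq> (\<lambda>_. 0)"
  obtains r where "length r = k" "(\<lambda>m. f (r @ [m])) \<noteq> (\<lambda>_. 0)"
proof -
  obtain ms where ms: "f ms \<noteq> 0" using assms(2) by blast
  then have "length ms = Suc k" using assms(1) by (auto simp: is_tensor_poly_def poly_supp_def)
  then have "length (butlast ms) = k" "ms = butlast ms @ [last ms]"
    by (auto intro!: append_butlast_last_id[symmetric])
  with ms that show ?thesis by (metis (mono_tags, lifting))
qed

lemma nonzero_mat_eval_tensor_0:
  assumes "is_tensor_poly 0 X I f" "f \<noteq> (\<lambda>_. 0)"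
  shows "nonzero_mat (eval_tensor 0 t \<sigma>s f)"
proof -
  obtain ms where "f ms \<noteq> 0" using assms(2) by blast
  with assms(1) have "poly_supp f = {[]}" "f [] \<noteq> 0"
    by (auto simp: is_tensor_poly_def poly_supp_def)
  then have "eval_tensor 0 t \<sigma>s f $$ (0, 0) \<noteq> 0"
    by (simp add: eval_tensor_def)
  then show ?thesis unfolding nonzero_mat_iff by fastforce
qed

lemma prob_nonzero_eval_tensor_ge:
  fixes A :: "nat \<Rightarrow> ('x \<Rightarrow> 'a::field mat) pmf" and f :: "'x list set list \<Rightarrow> 'a" and \<epsilon> :: real
  assumes "\<epsilon> \<ge> 0"
    and "\<And>i \<sigma>. i < k \<Longrightarrow> \<sigma> \<in> set_pmf (A i) \<Longrightarrow> is_evaluation (X i) (I i) (t i) \<sigma>"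
    and "\<And>i g. i < k \<Longrightarrow> is_pc_poly (X i) (I i) g \<Longrightarrow> pc_degree g \<le> d \<Longrightarrow> g \<noteq> (\<lambda>_. 0) \<Longrightarrow>
        measure_pmf.prob (A i) {\<sigma>. nonzero_mat (eval_poly (t i) \<sigma> g)} \<ge> 1 - \<epsilon>"
    and "is_tensor_poly k X I f" "f \<noteq> (\<lambda>_. 0)" "tensor_degree f \<le> d"
  shows "measure_pmf.prob (Pi_pmf {..<k} dflt A) {\<sigma>s. nonzero_mat (eval_tensor k t \<sigma>s f)}
    \<ge> 1 - real k * \<epsilon>"
  using assms(2-)
proof (induction k arbitrary: f)
  case 0
  then show ?case by (simp add: nonzero_mat_eval_tensor_0)
next
  case (Suc k)
  note ev = Suc.prems(1) and good = Suc.prems(2) and f = Suc.prems(3)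
  obtain r where "length r = k" and "(\<lambda>m. f (r @ [m])) \<noteq> (\<lambda>_. 0)"
    using f Suc.prems(4) by (rule obtain_nonzero_slice)
  moreover have "pc_degree (\<lambda>m. f (r @ [m])) \<le> d"
    using f Suc.prems(5) pc_degree_slice_le[of f r] by (simp add: is_tensor_poly_def)
  ultimately have "measure_pmf.prob (A k) {y. nonzero_mat (eval_poly (t k) y (\<lambda>m. f (r @ [m])))} \<ge> 1 - \<epsilon>"
    using good f by (simp add: is_pc_poly_slice)
  then show ?case
  proof (rule prob_Pi_pmf_lessThan_Suc_ge[OF \<open>\<epsilon> \<ge> 0\<close>])
    fix y
    assume y: "y \<in> set_pmf (A k)" "y \<in> {y. nonzero_mat (eval_poly (t k) y (\<lambda>m. f (r @ [m])))}"
    obtain \<phi> where nz: "contract_last f \<phi> r \<noteq> 0" and lift: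
      "\<And>\<sigma>s. (\<And>l. l < k \<Longrightarrow> is_evaluation (X l) (I l) (t l) (\<sigma>s l)) \<Longrightarrow>
        nonzero_mat (eval_tensor k t \<sigma>s (contract_last f \<phi>)) \<Longrightarrow>
        nonzero_mat (eval_tensor (Suc k) t (\<sigma>s(k := y)) f)"
      using f ev[OF lessI y(1)] y(2) unfolding mem_Collect_eq by (rule nonzero_slice_contraction) blast
    have "1 - real k * \<epsilon> \<le>
        measure_pmf.prob (Pi_pmf {..<k} dflt A) {h. nonzero_mat (eval_tensor k t h (contract_last f \<phi>))}"
    proof (rule Suc.IH)
      show "is_tensor_poly k X I (contract_last f \<phi>)"
        using f by (rule is_tensor_poly_contract_last)
      show "contract_last f \<phi> \<noteq> (\<lambda>_. 0)" using nz by auto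
      show "tensor_degree (contract_last f \<phi>) \<le> d"
        using f Suc.prems(5) tensor_degree_contract_last[of f \<phi>] by (simp add: is_tensor_poly_def)
    qed (use ev good in auto)
    also have "\<dots> \<le> measure_pmf.prob (Pi_pmf {..<k} dflt A)
        {h. h(k := y) \<in> {\<sigma>s. nonzero_mat (eval_tensor (Suc k) t \<sigma>s f)}}"
      using ev lift
      by (intro measure_pmf.finite_measure_mono_AE) (auto simp: AE_measure_pmf_iff set_Pi_pmf PiE_dflt_def)
    finally show "1 - real k * \<epsilon> \<le> measure_pmf.prob (Pi_pmf {..<k} dflt A)
        {h. h(k := y) \<in> {\<sigma>s. nonzero_mat (eval_tensor (Suc k) t \<sigma>s f)}}" .
  qed
qed

theorem lemma14:
  fixes k :: nat
    and X :: "nat \<Rightarrow> 'x set"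
    and I :: "nat \<Rightarrow> ('x \<times> 'x) set"
    and t :: "nat \<Rightarrow> nat"
    and d :: nat
    and A :: "nat \<Rightarrow> ('x \<Rightarrow> 'a::field mat) pmf"
    and f :: "'x list set list \<Rightarrow> 'a"
  assumes "k > 0"
    and pc: "\<And>i. i < k \<Longrightarrow> pc_data (X i) (I i)"
    and disj: "\<And>i j. i < k \<Longrightarrow> j < k \<Longrightarrow> i \<noteq> j \<Longrightarrow> X i \<inter> X j = {}"
    and outputs_eval: "\<And>i \<sigma>. i < k \<Longrightarrow> \<sigma> \<in> set_pmf (A i) \<Longrightarrow> is_evaluation (X i) (I i) (t i) \<sigma>"
    and A_good: "\<And>i g. i < k \<Longrightarrow> is_pc_poly (X i) (I i) g \<Longrightarrow> pc_degree g \<le> d \<Longrightarrow>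
        measure_pmf.prob (A i)
          {\<sigma>. g \<noteq> (\<lambda>_. 0) \<longleftrightarrow> nonzero_mat (eval_poly (t i) \<sigma> g)} \<ge> 1 - 1 / (2 * real k)"
    and f_poly: "is_tensor_poly k X I f"
    and f_nz: "f \<noteq> (\<lambda>_. 0)"
    and f_deg: "tensor_degree f \<le> d"
  shows "measure_pmf.prob (Pi_pmf {..<k} undefined A)
           {\<sigma>s. nonzero_mat (eval_tensor k t \<sigma>s f)} \<ge> 1 / 2"
proof -
  have "measure_pmf.prob (A i) {\<sigma>. nonzero_mat (eval_poly (t i) \<sigma> g)} \<ge> 1 - 1 / (2 * real k)"
    if "i < k" "is_pc_poly (X i) (I i) g" "pc_degree g \<le> d" "g \<noteq> (\<lambda>_. 0)" for i g
    using A_good[OF that(1-3)] that(4) by simp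
  then have "measure_pmf.prob (Pi_pmf {..<k} undefined A) {\<sigma>s. nonzero_mat (eval_tensor k t \<sigma>s f)}
      \<ge> 1 - real k * (1 / (2 * real k))"
    by (intro prob_nonzero_eval_tensor_ge[OF _ outputs_eval _ f_poly f_nz f_deg]) auto
  moreover have "1 - real k * (1 / (2 * real k)) = 1 / 2" using \<open>k > 0\<close> by simp
  ultimately show ?thesis by simp
qed

end
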